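(* For a barcode $f$ and any integer $p \ge 1$, $B(f^{\wedge p})$ and $D(f^{\wedge p})$ can be obtained from $C^{\wedge}(f)$: if $f, f'$ are barcodes with $C^{\wedge}(f) = C^{\wedge}(f')$, then $B(f^{\wedge p}) = B(f'^{\wedge p})$ and $D(f^{\wedge p}) = D(f'^{\wedge p})$ for all $p \ge 1$.
   Context: A barcode is a finite formal sum $f = \sum_{i=1}^n x^{\alpha_i}y^{\ell_i}$ with $n\ge0$, $\alpha_i \in \mathbb{R}$, $\ell_i \in \mathbb{R}_{>0}$ (a finite multiset of bars). Its $p$-th exterior power ($p\ge1$) is $f^{\wedge p} = \sum_{1\le i_1<\cdots<i_p\le n} x^{\alpha_{i_1}+\cdots+\alpha_{i_p}}y^{\min\{\ell_{i_1},\ldots,\ell_{i_p}\}}$ (zero if $p>n$). The birth series is $B(f) = \sum_i x^{\alpha_i}$, the death series $D(f) = \sum_i x^{\alpha_i+\ell_i}$, the critical series $C(f) = B(f) - D(f)$ (finite integer combinations of symbols $x^g$, $g\in\mathbb{R}$), and $C^{\wedge}(f) = \sum_{p\ge1} C(f^{\wedge p})z^p$ with $z$ an indeterminate. *)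

theory Defs
  imports Complex_Main "HOL-Library.Multiset"
begin

text \<open>A bar x^alpha y^l is the pair (alpha, l). A barcode is a finite list of bars
  (an enumeration of the multiset of bars) with all lengths positive.\<close>
type_synonym bar = "real \<times> real"

definition is_barcode :: "bar list \<Rightarrow> bool" where
  "is_barcode f \<longleftrightarrow> (\<forall>b\<in>set f. snd b > 0)"

definition ext_pow :: "bar list \<Rightarrow> nat \<Rightarrow> bar multiset" where
  "ext_pow f p = image_mset
     (\<lambda>S. (\<Sum>i\<in>S. fst (f ! i), Min ((\<lambda>i. snd (f ! i)) ` S)))
     (mset_set {S. S \<subseteq> {..<length f} \<and> card S = p})"

text \<open>Formal sums of symbols x^g with integer coefficients, as coefficient functions.\<close>
definition birth :: "bar multiset \<Rightarrow> real \<Rightarrow> int" where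
  "birth f g = int (size (filter_mset (\<lambda>b. fst b = g) f))"

definition death :: "bar multiset \<Rightarrow> real \<Rightarrow> int" where
  "death f g = int (size (filter_mset (\<lambda>b. fst b + snd b = g) f))"

definition crit :: "bar multiset \<Rightarrow> real \<Rightarrow> int" where
  "crit f g = birth f g - death f g"

text \<open>C^wedge(f) = sum_{p>=1} C(f^p) z^p, as coefficient function in p (0 at p = 0).\<close>
definition crit_ext :: "bar list \<Rightarrow> nat \<Rightarrow> real \<Rightarrow> int" where
  "crit_ext f p = (if 1 \<le> p then crit (ext_pow f p) else (\<lambda>_. 0))"

end

theory Submission
  imports Defs "HOL-Combinatorics.Permutations"
begin

text \<open>The births of \<open>f\<^sup>\<and>\<^sup>p\<close> are the sums of the \<open>\<alpha>\<^sub>i\<close> over \<open>p\<close>-element index sets. Since all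
  bars have positive length, every death of \<open>f\<^sup>\<and>\<^sup>p\<close> lies strictly above the smallest such sum,
  so the least point where \<open>C(f\<^sup>\<and>\<^sup>p)\<close> is nonzero is the sum of the \<open>p\<close> smallest \<open>\<alpha>\<^sub>i\<close>, and
  \<open>C(f\<^sup>\<and>\<^sup>p)\<close> vanishes exactly when \<open>p\<close> exceeds the number of bars. Successive differences
  of these minima give the sorted list of the \<open>\<alpha>\<^sub>i\<close>, which determines every \<open>B(f\<^sup>\<and>\<^sup>p)\<close>;
  finally \<open>D(f\<^sup>\<and>\<^sup>p) = B(f\<^sup>\<and>\<^sup>p) - C(f\<^sup>\<and>\<^sup>p)\<close>.\<close>

definition index_subsets :: "nat \<Rightarrow> nat \<Rightarrow> nat set set" where
  "index_subsets n p = {S. S \<subseteq> {..<n} \<and> card S = p}"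

lemma finite_index_subsets [simp]: "finite (index_subsets n p)"
  unfolding index_subsets_def by (rule finite_subset[of _ "Pow {..<n}"]) auto

lemma index_subsets_eq_empty_iff: "index_subsets n p = {} \<longleftrightarrow> n < p"
proof
  assume "index_subsets n p = {}"
  moreover have "{..<p} \<in> index_subsets n p" if "p \<le> n"
    using that unfolding index_subsets_def by simp
  ultimately show "n < p" by (cases "p \<le> n") auto
next
  assume "n < p"
  then show "index_subsets n p = {}"
    unfolding index_subsets_def by (auto dest: card_mono[rotated, of _ "{..<n}"])
qed

lemma image_index_subsets_permutes:
  assumes "h permutes {..<n}"
  shows "image h ` index_subsets n p = index_subsets n p"
proof -
  have permuted: "g ` S \<in> index_subsets n p" if "g permutes {..<n}" "S \<in> index_subsets n p" for g S
  proof -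
    have "inj_on g S" using permutes_inj[OF that(1)] by (rule inj_on_subset) simp
    moreover have "g ` S \<subseteq> g ` {..<n}" using that(2) unfolding index_subsets_def by blast
    ultimately show ?thesis
      using that permutes_image[OF that(1)] unfolding index_subsets_def by (simp add: card_image)
  qed
  show ?thesis
  proof
    show "image h ` index_subsets n p \<subseteq> index_subsets n p"
      using permuted[OF assms] by blast
    show "index_subsets n p \<subseteq> image h ` index_subsets n p"
    proof
      fix T assume "T \<in> index_subsets n p"
      then have "inv h ` T \<in> index_subsets n p" by (rule permuted[OF permutes_inv[OF assms]])
      moreover have "T = h ` inv h ` T"
        using permutes_surj[OF assms] by (simp add: image_image surj_f_inv_f)
      ultimately show "T \<in> image h ` index_subsets n p" by blast
    qed
  qed
qed

definition subset_sums :: "'a::comm_monoid_add list \<Rightarrow> nat \<Rightarrow> 'a multiset" where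
  "subset_sums xs p = image_mset (\<lambda>S. \<Sum>i\<in>S. xs ! i) (mset_set (index_subsets (length xs) p))"

lemma subset_sums_permute_list:
  assumes h: "h permutes {..<length xs}"
  shows "subset_sums (permute_list h xs) p = subset_sums xs p"
proof -
  let ?I = "index_subsets (length xs) p"
  have "subset_sums (permute_list h xs) p = image_mset (\<lambda>S. \<Sum>i\<in>S. xs ! h i) (mset_set ?I)"
    unfolding subset_sums_def length_permute_list
    by (intro image_mset_cong sum.cong) (auto simp: permute_list_nth[OF h] index_subsets_def)
  also have "\<dots> = image_mset (\<lambda>S. \<Sum>j\<in>S. xs ! j) (image_mset (image h) (mset_set ?I))"
    using permutes_inj[OF h] by (simp add: multiset.map_comp o_def sum.reindex inj_on_subset)
  also have "image_mset (image h) (mset_set ?I) = mset_set ?I"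
  proof -
    have "inj (image h)"
      using permutes_inj[OF h] by (simp add: inj_def inj_image_eq_iff)
    then show ?thesis
      by (simp add: image_mset_mset_set inj_on_subset image_index_subsets_permutes[OF h])
  qed
  finally show ?thesis unfolding subset_sums_def .
qed

lemma subset_sums_mset_cong:
  assumes "mset xs = mset ys"
  shows "subset_sums xs p = subset_sums ys p"
proof -
  obtain h where "h permutes {..<length ys}" "permute_list h ys = xs"
    using mset_eq_permutation[OF assms] .
  then show ?thesis by (metis subset_sums_permute_list)
qed

lemma sorted_less_index_le_nth:
  "sorted_wrt (<) (ns :: nat list) \<Longrightarrow> k < length ns \<Longrightarrow> k \<le> ns ! k"
proof (induction k)
  case (Suc k)
  then have "ns ! k < ns ! Suc k" using sorted_wrt_nth_less by fastforce
  with Suc show ?case by simp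
qed simp

lemma sum_list_take_le_sum_nth:
  fixes xs :: "'a::{ordered_comm_monoid_add,linorder} list"
  assumes "sorted xs" and S: "S \<in> index_subsets (length xs) p"
  shows "sum_list (take p xs) \<le> (\<Sum>i\<in>S. xs ! i)"
proof -
  define ns where "ns = sorted_list_of_set S"
  have S_sub: "S \<subseteq> {..<length xs}" and "finite S" and "card S = p"
    using S finite_subset unfolding index_subsets_def by auto
  then have ns: "sorted_wrt (<) ns" "set ns = S" "distinct ns" "length ns = p"
    unfolding ns_def by auto
  have "p \<le> length xs" using S_sub \<open>card S = p\<close> card_mono[of "{..<length xs}" S] by simp
  then have "sum_list (take p xs) = (\<Sum>k<p. xs ! k)"
    by (simp add: sum_list_sum_nth atLeast0LessThan min_def)
  also have "\<dots> \<le> (\<Sum>k<p. xs ! (ns ! k))"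
  proof (rule sum_mono)
    fix k assume "k \<in> {..<p}"
    then have "ns ! k \<in> S" "k \<le> ns ! k"
      using ns nth_mem sorted_less_index_le_nth[OF ns(1)] by auto
    then show "xs ! k \<le> xs ! (ns ! k)"
      using S_sub \<open>sorted xs\<close> sorted_nth_mono by blast
  qed
  also have "\<dots> = sum_list (map ((!) xs) ns)"
    using ns by (simp add: sum_list_sum_nth atLeast0LessThan)
  also have "\<dots> = (\<Sum>i\<in>S. xs ! i)"
    using ns by (simp add: sum_list_distinct_conv_sum_set)
  finally show ?thesis .
qed

definition min_subset_sum :: "'a::{comm_monoid_add,linorder} list \<Rightarrow> nat \<Rightarrow> 'a" where
  "min_subset_sum xs p = Min (set_mset (subset_sums xs p))"

lemma min_subset_sum_le:
  "x \<in># subset_sums xs p \<Longrightarrow> min_subset_sum xs p \<le> x"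
  unfolding min_subset_sum_def by simp

lemma min_subset_sum_mem:
  assumes "p \<le> length xs"
  shows "min_subset_sum xs p \<in># subset_sums xs p"
proof -
  have "index_subsets (length xs) p \<noteq> {}"
    using assms by (simp add: index_subsets_eq_empty_iff)
  then have "subset_sums xs p \<noteq> {#}"
    by (simp add: subset_sums_def mset_set_empty_iff)
  then show ?thesis unfolding min_subset_sum_def by simp
qed

lemma min_subset_sum_eq_sum_take_sort:
  fixes xs :: "'a::{ordered_comm_monoid_add,linorder} list"
  assumes "p \<le> length xs"
  shows "min_subset_sum xs p = sum_list (take p (sort xs))"
proof -
  let ?ys = "sort xs"
  have "subset_sums xs p = subset_sums ?ys p"
    by (rule subset_sums_mset_cong) simp
  moreover have "min_subset_sum ?ys p = sum_list (take p ?ys)"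
    unfolding min_subset_sum_def
  proof (rule Min_eqI)
    have "{..<p} \<in> index_subsets (length ?ys) p"
      using assms by (simp add: index_subsets_def)
    then have "(\<Sum>i<p. ?ys ! i) \<in># subset_sums ?ys p"
      unfolding subset_sums_def by simp
    moreover have "(\<Sum>i<p. ?ys ! i) = sum_list (take p ?ys)"
      using assms by (simp add: sum_list_sum_nth atLeast0LessThan min_def)
    ultimately show "sum_list (take p ?ys) \<in> set_mset (subset_sums ?ys p)" by simp
  next
    fix y assume "y \<in> set_mset (subset_sums ?ys p)"
    then obtain S where "S \<in> index_subsets (length ?ys) p" "y = (\<Sum>i\<in>S. ?ys ! i)"
      unfolding subset_sums_def by auto
    then show "sum_list (take p ?ys) \<le> y"
      by (simp add: sum_list_take_le_sum_nth)
  qed simp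
  ultimately show ?thesis by (simp add: min_subset_sum_def)
qed

lemma eq_if_sum_list_take_eq:
  fixes xs ys :: "'a::{monoid_add,cancel_ab_semigroup_add} list"
  assumes "length xs = length ys"
    and "\<And>q. q \<le> length xs \<Longrightarrow> sum_list (take q xs) = sum_list (take q ys)"
  shows "xs = ys"
proof (rule nth_equalityI[OF assms(1)])
  fix k assume k: "k < length xs"
  have "sum_list (take k xs) + xs ! k = sum_list (take k ys) + ys ! k"
    using assms(2)[of "Suc k"] k by (simp add: assms(1) take_Suc_conv_app_nth)
  then show "xs ! k = ys ! k" using assms(2)[of k] k by simp
qed

lemma mset_eq_if_min_subset_sum_eq:
  fixes xs ys :: "'a::{ordered_cancel_comm_monoid_add,linorder} list"
  assumes "length xs = length ys"
    and "\<And>q. 1 \<le> q \<Longrightarrow> q \<le> length xs \<Longrightarrow> min_subset_sum xs q = min_subset_sum ys q"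
  shows "mset xs = mset ys"
proof -
  have "sort xs = sort ys"
  proof (rule eq_if_sum_list_take_eq)
    fix q assume "q \<le> length (sort xs)"
    then show "sum_list (take q (sort xs)) = sum_list (take q (sort ys))"
      using assms min_subset_sum_eq_sum_take_sort[of q xs] min_subset_sum_eq_sum_take_sort[of q ys]
      by (cases "q = 0") auto
  qed (simp add: assms(1))
  then show ?thesis by (metis mset_sort)
qed

lemma ext_pow_eq_image_mset:
  "ext_pow f p = image_mset (\<lambda>S. (\<Sum>i\<in>S. fst (f ! i), Min ((\<lambda>i. snd (f ! i)) ` S)))
     (mset_set (index_subsets (length f) p))"
  unfolding ext_pow_def index_subsets_def ..

lemma image_mset_fst_ext_pow: "image_mset fst (ext_pow f p) = subset_sums (map fst f) p"
  unfolding ext_pow_eq_image_mset subset_sums_def multiset.map_comp length_map o_def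
  by (auto intro!: image_mset_cong sum.cong simp: index_subsets_def dest!: subsetD)

lemma birth_ext_pow: "birth (ext_pow f p) g = int (count (subset_sums (map fst f) p) g)"
  unfolding birth_def image_mset_fst_ext_pow[symmetric]
  by (simp add: count_conv_size_mset filter_mset_image_mset)

lemma ext_pow_eq_empty_iff: "ext_pow f p = {#} \<longleftrightarrow> length f < p"
  by (simp add: ext_pow_eq_image_mset mset_set_empty_iff index_subsets_eq_empty_iff)

lemma snd_ext_pow_pos:
  assumes "is_barcode f" "1 \<le> p" "b \<in># ext_pow f p"
  shows "0 < snd b"
proof -
  obtain S where S: "S \<in> index_subsets (length f) p" and b: "snd b = Min ((\<lambda>i. snd (f ! i)) ` S)"
    using assms(3) unfolding ext_pow_eq_image_mset by auto
  have "finite S" "S \<noteq> {}" "\<forall>i\<in>S. 0 < snd (f ! i)"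
    using S assms(1,2) finite_subset[of S "{..<length f}"] unfolding index_subsets_def is_barcode_def
    by (auto dest!: subsetD)
  then show ?thesis unfolding b by simp
qed

lemma death_ext_pow_eq_0:
  assumes "is_barcode f" "1 \<le> p" "\<And>x. x \<in># subset_sums (map fst f) p \<Longrightarrow> g \<le> x"
  shows "death (ext_pow f p) g = 0"
proof -
  have "fst b + snd b \<noteq> g" if "b \<in># ext_pow f p" for b
  proof -
    have "fst b \<in># subset_sums (map fst f) p"
      using that by (simp flip: image_mset_fst_ext_pow)
    then have "g \<le> fst b" by (rule assms(3))
    then show ?thesis using snd_ext_pow_pos[OF assms(1,2) that] by simp
  qed
  then show ?thesis unfolding death_def by (simp add: filter_mset_eq_mempty_iff)
qed

lemma crit_ext_pow_below_min_subset_sum: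
  assumes "is_barcode f" "1 \<le> p" "g < min_subset_sum (map fst f) p"
  shows "crit (ext_pow f p) g = 0"
proof -
  have below: "g < x" if "x \<in># subset_sums (map fst f) p" for x
    using assms(3) min_subset_sum_le[OF that] by simp
  then have "count (subset_sums (map fst f) p) g = 0"
    by (auto simp: count_eq_zero_iff)
  moreover have "death (ext_pow f p) g = 0"
    using below by (intro death_ext_pow_eq_0[OF assms(1,2)]) (simp add: less_imp_le)
  ultimately show ?thesis by (simp add: crit_def birth_ext_pow)
qed

lemma crit_ext_pow_min_subset_sum_pos:
  assumes "is_barcode f" "1 \<le> p" "p \<le> length f"
  shows "0 < crit (ext_pow f p) (min_subset_sum (map fst f) p)"
proof -
  have "death (ext_pow f p) (min_subset_sum (map fst f) p) = 0"
    using assms(1,2) min_subset_sum_le by (rule death_ext_pow_eq_0)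
  moreover have "min_subset_sum (map fst f) p \<in># subset_sums (map fst f) p"
    using assms(3) by (simp add: min_subset_sum_mem)
  ultimately show ?thesis by (simp add: crit_def birth_ext_pow)
qed

lemma Least_crit_ext_pow:
  assumes "is_barcode f" "1 \<le> p" "p \<le> length f"
  shows "(LEAST g. crit (ext_pow f p) g \<noteq> 0) = min_subset_sum (map fst f) p"
proof (rule Least_equality)
  show "crit (ext_pow f p) (min_subset_sum (map fst f) p) \<noteq> 0"
    using crit_ext_pow_min_subset_sum_pos[OF assms] by simp
  fix g assume "crit (ext_pow f p) g \<noteq> 0"
  then show "min_subset_sum (map fst f) p \<le> g"
    using crit_ext_pow_below_min_subset_sum[OF assms(1,2)] by (meson not_le)
qed

lemma crit_ext_pow_eq_0_iff:
  assumes "is_barcode f" "1 \<le> p"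
  shows "crit (ext_pow f p) = (\<lambda>_. 0) \<longleftrightarrow> length f < p"
proof
  assume "length f < p"
  then show "crit (ext_pow f p) = (\<lambda>_. 0)"
    by (simp add: ext_pow_eq_empty_iff[THEN iffD2] fun_eq_iff crit_def birth_def death_def)
next
  assume "crit (ext_pow f p) = (\<lambda>_. 0)"
  then show "length f < p"
    using crit_ext_pow_min_subset_sum_pos[OF assms] by (cases "p \<le> length f") auto
qed

lemma length_eq_if_crit_ext_eq:
  assumes "is_barcode f" "is_barcode f'" "crit_ext f = crit_ext f'"
  shows "length f = length f'"
proof -
  have "length f < p \<longleftrightarrow> length f' < p" if "1 \<le> p" for p
    using crit_ext_pow_eq_0_iff[OF assms(1) that] crit_ext_pow_eq_0_iff[OF assms(2) that]
      fun_cong[OF assms(3), of p] that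
    by (simp add: crit_ext_def)
  from this[of "Suc (length f)"] this[of "Suc (length f')"] show ?thesis by simp
qed

theorem proposition13:
  fixes f f' :: "bar list" and p :: nat
  assumes "is_barcode f" and "is_barcode f'"
    and "crit_ext f = crit_ext f'"
    and "1 \<le> p"
  shows "birth (ext_pow f p) = birth (ext_pow f' p) \<and> death (ext_pow f p) = death (ext_pow f' p)"
proof -
  have crit_eq: "crit (ext_pow f q) = crit (ext_pow f' q)" if "1 \<le> q" for q
    using fun_cong[OF assms(3), of q] that by (simp add: crit_ext_def)
  have len: "length f = length f'"
    using assms(1-3) by (rule length_eq_if_crit_ext_eq)
  have "mset (map fst f) = mset (map fst f')"
  proof (rule mset_eq_if_min_subset_sum_eq)
    fix q assume "1 \<le> q" "q \<le> length (map fst f)"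
    then show "min_subset_sum (map fst f) q = min_subset_sum (map fst f') q"
      using assms(1,2) len crit_eq by (simp flip: Least_crit_ext_pow)
  qed (simp add: len)
  then have "subset_sums (map fst f) p = subset_sums (map fst f') p"
    by (rule subset_sums_mset_cong)
  then have births: "birth (ext_pow f p) = birth (ext_pow f' p)"
    by (simp add: fun_eq_iff birth_ext_pow)
  moreover have "death (ext_pow f p) = death (ext_pow f' p)"
    using births crit_eq[OF assms(4)] by (simp add: fun_eq_iff crit_def)
  ultimately show ?thesis ..
qed

end
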